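(* Let $\mathbf{x}\in\mathbb{R}^p$ be an observation with outcome $y\in\mathcal{Y}$, and $\lambda\ge 0$. Consider a generative density $p_\theta(\mathbf{x},\mathbf{s})$ with latent $\mathbf{s}\in\mathbb{R}^L$, a predictive model $p_\psi(y\mid\mathbf{s})$ and a variational encoder $q_\phi(\mathbf{s}\mid\mathbf{x})$, all infinitely differentiable in their parameters, where $\mathbf{s}\sim q_\phi(\mathbf{s}\mid\mathbf{x})$ is reparameterized as $\mathbf{s}=g_\phi(\epsilon,\mathbf{x})$ with $\epsilon\sim p(\epsilon)$ independent of $\phi,\mathbf{x}$, and gradients may be interchanged with expectations over $p(\epsilon)$. Consider the constrained problem $$\max_{\psi,\theta,\phi}\ \mathbb{E}_{q_\phi(\mathbf{s}\mid\mathbf{x})}\bigl[\log p_\theta(\mathbf{x},\mathbf{s})-\log q_\phi(\mathbf{s}\mid\mathbf{x})+\lambda\log p_\psi(y\mid\mathbf{s})\bigr]\quad\text{s.t.}\quad \nabla_\phi\,\mathbb{E}_{q_\phi(\mathbf{s}\mid\mathbf{x})}\bigl[\log p_\theta(\mathbf{x},\mathbf{s})-\log q_\phi(\mathbf{s}\mid\mathbf{x})\bigr]=0,$$ where, near the point of interest, the constraint determines $\phi=h(\theta)$ as a differentiable function of $\theta$ (by the implicit function theorem), and derivatives with respect to $\theta$ of terms depending on $\phi$ are taken through this dependence. Then at a stationary point of this problem: (i) $\phi$ satisfies the VAE stationarity condition $$\mathbb{E}_{p(\epsilon)}\Bigl[\nabla_\phi\bigl(\log p_\theta(\mathbf{x},g_\phi(\epsilon,\mathbf{x}))-\log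 q_\phi(g_\phi(\epsilon,\mathbf{x})\mid\mathbf{x})\bigr)\Bigr]=0;$$ (ii) $\theta$ satisfies $$\mathbb{E}_{p(\epsilon)}\bigl[\nabla_\theta\log p_\theta(\mathbf{x},g_\phi(\epsilon,\mathbf{x}))\bigr]=-\lambda\,\mathbb{E}_{p(\epsilon)}\bigl[\nabla_\theta\log p_\psi(y\mid g_\phi(\epsilon,\mathbf{x}))\bigr];$$ (iii) $\psi$, given $\phi$, satisfies the same stationarity condition as for the unconstrained supervised VAE objective, namely $\mathbb{E}_{p(\epsilon)}\bigl[\nabla_\psi\log p_\psi(y\mid g_\phi(\epsilon,\mathbf{x}))\bigr]=0$.
   Context: $\theta$ parameterizes the generative model, $\psi$ the classifier $p_\psi(y\mid\mathbf{s})$, and $\phi$ the encoder $q_\phi(\mathbf{s}\mid\mathbf{x})$ (which does not condition on $y$). The constraint (a first-order replacement of requiring $\phi$ to maximize the evidence lower bound for fixed $\theta$) forces the encoder to be a stationary point of the purely generative ELBO. In (ii), $\nabla_\theta\log p_\psi(y\mid g_\phi(\epsilon,\mathbf{x}))$ is nonzero only through the dependence $\phi=h(\theta)$ induced by the constraint. The objective is written for a single data pair $(\mathbf{x},y)$. *)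

theory Defs
  imports "HOL-Probability.Probability"
begin

definition grad :: "('a::euclidean_space \<Rightarrow> real) \<Rightarrow> 'a \<Rightarrow> 'a" where
  "grad f a = (\<Sum>b\<in>Basis. frechet_derivative f (at a) b *\<^sub>R b)"

definition grad_interchange ::
  "'e measure \<Rightarrow> ('e \<Rightarrow> 'a::euclidean_space \<Rightarrow> real) \<Rightarrow> 'a \<Rightarrow> bool" where
  "grad_interchange P f a \<longleftrightarrow>
     (\<forall>e\<in>space P. f e differentiable (at a)) \<and>
     integrable P (\<lambda>e. grad (f e) a) \<and>
     (\<lambda>u. \<integral>e. f e u \<partial>P) differentiable (at a) \<and>
     grad (\<lambda>u. \<integral>e. f e u \<partial>P) a = (\<integral>e. grad (f e) a \<partial>P)"

definition elbo ::
  "'e measure \<Rightarrow> ('t \<Rightarrow> real^'p \<Rightarrow> real^'l \<Rightarrow> real) \<Rightarrow> ('f \<Rightarrow> real^'l \<Rightarrow> real^'p \<Rightarrow> real)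
   \<Rightarrow> ('f \<Rightarrow> 'e \<Rightarrow> real^'p \<Rightarrow> real^'l) \<Rightarrow> real^'p \<Rightarrow> 't \<Rightarrow> 'f \<Rightarrow> real" where
  "elbo P p q g x \<theta> \<phi> =
     (\<integral>e. ln (p \<theta> x (g \<phi> e x)) - ln (q \<phi> (g \<phi> e x) x) \<partial>P)"

definition sup_obj ::
  "'e measure \<Rightarrow> ('t \<Rightarrow> real^'p \<Rightarrow> real^'l \<Rightarrow> real) \<Rightarrow> ('f \<Rightarrow> real^'l \<Rightarrow> real^'p \<Rightarrow> real)
   \<Rightarrow> ('w \<Rightarrow> 'y \<Rightarrow> real^'l \<Rightarrow> real) \<Rightarrow> ('f \<Rightarrow> 'e \<Rightarrow> real^'p \<Rightarrow> real^'l)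
   \<Rightarrow> real \<Rightarrow> real^'p \<Rightarrow> 'y \<Rightarrow> 't \<Rightarrow> 'f \<Rightarrow> 'w \<Rightarrow> real" where
  "sup_obj P p q py g lam x y \<theta> \<phi> \<psi> =
     (\<integral>e. ln (p \<theta> x (g \<phi> e x)) - ln (q \<phi> (g \<phi> e x) x)
            + lam * ln (py \<psi> y (g \<phi> e x)) \<partial>P)"

end

theory Submission
  imports Defs
begin

text \<open>Part (i) is the constraint at \<open>\<theta>0\<close>, with gradient and expectation interchanged.
  For part (ii), write the ELBO integrand as \<open>A(\<theta>, \<phi>)\<close>. By the chain rule the gradient of
  \<open>\<theta> \<mapsto> A(\<theta>, h \<theta>)\<close> is the partial gradient in \<open>\<theta>\<close> plus the adjoint of \<open>Dh\<close> applied to the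
  partial gradient in \<open>\<phi>\<close>; the latter has expectation zero by (i), an envelope argument, so
  only \<open>\<nabla>\<^sub>\<theta> log p\<^sub>\<theta>\<close> and the \<open>\<lambda> log p\<^sub>\<psi>\<close> term survive in the stationarity condition for
  \<open>\<theta>\<close>. Part (iii) holds because only the \<open>\<lambda> log p\<^sub>\<psi>\<close> term depends on \<open>\<psi>\<close>.\<close>

lemma inner_grad:
  assumes "(f has_derivative D) (at a)"
  shows "grad f a \<bullet> v = D v"
proof -
  have "linear D" using assms by (rule has_derivative_linear)
  have "D v = D (\<Sum>b\<in>Basis. (v \<bullet> b) *\<^sub>R b)" by (simp add: euclidean_representation)
  also have "\<dots> = (\<Sum>b\<in>Basis. (v \<bullet> b) * D b)"
    using \<open>linear D\<close> by (simp add: linear_sum linear_scale)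
  also have "\<dots> = grad f a \<bullet> v"
    using frechet_derivative_at[OF assms]
    by (simp add: grad_def inner_sum_right inner_commute mult.commute)
  finally show ?thesis ..
qed

lemma grad_eqI:
  assumes "(f has_derivative D) (at a)" and "\<And>v. w \<bullet> v = D v"
  shows "grad f a = w"
  using assms by (metis inner_grad vector_eq_rdot)

lemma grad_const: "grad (\<lambda>u. c) a = 0"
  by (rule grad_eqI[OF has_derivative_const]) simp

lemma grad_add:
  assumes "f differentiable (at a)" and "g differentiable (at a)"
  shows "grad (\<lambda>u. f u + g u) a = grad f a + grad g a"
proof -
  obtain Df Dg where "(f has_derivative Df) (at a)" "(g has_derivative Dg) (at a)"
    using assms unfolding differentiable_def by blast
  then show ?thesis
    by (intro grad_eqI[OF has_derivative_add]) (simp_all add: inner_add_left inner_grad)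
qed

lemma grad_diff:
  assumes "f differentiable (at a)" and "g differentiable (at a)"
  shows "grad (\<lambda>u. f u - g u) a = grad f a - grad g a"
proof -
  obtain Df Dg where "(f has_derivative Df) (at a)" "(g has_derivative Dg) (at a)"
    using assms unfolding differentiable_def by blast
  then show ?thesis
    by (intro grad_eqI[OF has_derivative_diff]) (simp_all add: inner_diff_left inner_grad)
qed

lemma grad_cmult:
  assumes "f differentiable (at a)"
  shows "grad (\<lambda>u. c * f u) a = c *\<^sub>R grad f a"
proof -
  obtain D where D: "(f has_derivative D) (at a)"
    using assms unfolding differentiable_def by blast
  show ?thesis
    by (rule grad_eqI[OF has_derivative_mult_right[OF D]]) (simp add: inner_grad[OF D])
qed

lemma grad_total_derivative:
  fixes F :: "'a::euclidean_space \<Rightarrow> 'b::euclidean_space \<Rightarrow> real"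
  assumes F: "(\<lambda>(u, v). F u v) differentiable (at (a, h a))"
    and h: "(h has_derivative Dh) (at a)"
  shows "grad (\<lambda>u. F u (h u)) a = grad (\<lambda>u. F u (h a)) a + adjoint Dh (grad (F a) (h a))"
proof -
  obtain D where D: "((\<lambda>(u, v). F u v) has_derivative D) (at (a, h a))"
    using F unfolding differentiable_def by blast
  have D1: "((\<lambda>u. F u (h a)) has_derivative (\<lambda>du. D (du, 0))) (at a)"
    using has_derivative_compose[OF has_derivative_Pair[OF has_derivative_ident has_derivative_const] D]
    by simp
  have D2: "(F a has_derivative (\<lambda>dv. D (0, dv))) (at (h a))"
    using has_derivative_compose[OF has_derivative_Pair[OF has_derivative_const has_derivative_ident] D]
    by simp
  have DF: "((\<lambda>u. F u (h u)) has_derivative (\<lambda>du. D (du, Dh du))) (at a)"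
    using has_derivative_compose[OF has_derivative_Pair[OF has_derivative_ident h] D] by simp
  show ?thesis
  proof (rule grad_eqI[OF DF])
    fix v
    have "D (v, Dh v) = D (v, 0) + D (0, Dh v)"
      using linear_add[OF has_derivative_linear[OF D], of "(v, 0)" "(0, Dh v)"] by simp
    then show "(grad (\<lambda>u. F u (h a)) a + adjoint Dh (grad (F a) (h a))) \<bullet> v = D (v, Dh v)"
      by (simp add: inner_add_left inner_grad[OF D1] inner_grad[OF D2]
          adjoint_clauses(2)[OF has_derivative_linear[OF h]])
  qed
qed

lemma differentiable_ln:
  fixes f :: "'a::real_normed_vector \<Rightarrow> real"
  assumes "f differentiable (at a)" and "0 < f a"
  shows "(\<lambda>z. ln (f z)) differentiable (at a)"
  using assms has_derivative_ln unfolding differentiable_def by blast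

lemma differentiable_compose_case_prod:
  assumes "(\<lambda>(x, y). F x y) differentiable (at (u z, v z))"
    and "u differentiable (at z)" and "v differentiable (at z)"
  shows "(\<lambda>z. F (u z) (v z)) differentiable (at z)"
  using differentiable_compose[OF assms(1) differentiable_Pair[OF assms(2,3)]] by simp

lemma differentiable_ln_compose_case_prod:
  fixes F :: "'a::real_normed_vector \<Rightarrow> 'b::real_normed_vector \<Rightarrow> real"
  assumes "\<And>a s. (\<lambda>(a', s'). F a' s') differentiable (at (a, s))" and "\<And>a s. 0 < F a s"
    and "u differentiable (at z)" and "v differentiable (at z)"
  shows "(\<lambda>z. ln (F (u z) (v z))) differentiable (at z)"
  by (intro differentiable_ln differentiable_compose_case_prod[OF assms(1)] assms(2-4))

lemma differentiable_elbo_integrand: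
  fixes F :: "'a::real_normed_vector \<Rightarrow> 's::real_normed_vector \<Rightarrow> real"
    and Q :: "'b::real_normed_vector \<Rightarrow> 's \<Rightarrow> real"
  assumes "\<And>a s. (\<lambda>(a', s'). F a' s') differentiable (at (a, s))" and "\<And>a s. 0 < F a s"
    and "\<And>b s. (\<lambda>(b', s'). Q b' s') differentiable (at (b, s))" and "\<And>b s. 0 < Q b s"
    and "\<And>b. G differentiable (at b)"
  shows "(\<lambda>(a, b). ln (F a (G b)) - ln (Q b (G b))) differentiable (at (a, b))"
  unfolding case_prod_beta'
  by (intro differentiable_diff differentiable_ln_compose_case_prod[OF assms(1,2)]
      differentiable_ln_compose_case_prod[OF assms(3,4)] differentiable_compose[OF assms(5)])
    (auto intro: bounded_linear_imp_differentiable bounded_linear_fst bounded_linear_snd)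

lemma integral_grad_envelope:
  fixes A :: "'e \<Rightarrow> 'a::euclidean_space \<Rightarrow> 'b::euclidean_space \<Rightarrow> real"
    and B :: "'e \<Rightarrow> 'a \<Rightarrow> real"
  assumes A: "\<And>e. (\<lambda>(u, v). A e u v) differentiable (at (a, h a))"
    and B: "\<And>e. B e differentiable (at a)"
    and h: "(h has_derivative Dh) (at a)"
    and int_Au: "integrable M (\<lambda>e. grad (\<lambda>u. A e u (h a)) a)"
    and int_Av: "integrable M (\<lambda>e. grad (A e a) (h a))"
    and int_B: "integrable M (\<lambda>e. grad (B e) a)"
    and stationary: "(\<integral>e. grad (A e a) (h a) \<partial>M) = 0"
  shows "(\<integral>e. grad (\<lambda>u. A e u (h u) + c * B e u) a \<partial>M)
       = (\<integral>e. grad (\<lambda>u. A e u (h a)) a \<partial>M) + c *\<^sub>R (\<integral>e. grad (B e) a \<partial>M)"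
proof -
  have h_diff: "h differentiable (at a)"
    using h unfolding differentiable_def by blast
  have pointwise: "grad (\<lambda>u. A e u (h u) + c * B e u) a
      = grad (\<lambda>u. A e u (h a)) a + adjoint Dh (grad (A e a) (h a)) + c *\<^sub>R grad (B e) a" for e
  proof -
    have "(\<lambda>u. A e u (h u)) differentiable (at a)"
      using differentiable_compose_case_prod[OF A differentiable_ident h_diff] .
    moreover have "(\<lambda>u. c * B e u) differentiable (at a)"
      using B by simp
    ultimately show ?thesis
      by (simp add: grad_add grad_cmult[OF B] grad_total_derivative[OF A h])
  qed
  have adjoint_bl: "bounded_linear (adjoint Dh)"
    using adjoint_linear[OF has_derivative_linear[OF h]] by (simp add: linear_conv_bounded_linear)
  have "(\<integral>e. adjoint Dh (grad (A e a) (h a)) \<partial>M) = 0"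
    using integral_bounded_linear[OF adjoint_bl int_Av] stationary
      linear_0[OF adjoint_linear[OF has_derivative_linear[OF h]]] by simp
  then show ?thesis
    unfolding pointwise
    using int_Au int_B integrable_bounded_linear[OF adjoint_bl int_Av] by simp
qed

lemma integral_grad_const_add_cmult:
  assumes "\<And>e. f e differentiable (at a)"
  shows "(\<integral>e. grad (\<lambda>u. c e + k * f e u) a \<partial>M) = k *\<^sub>R (\<integral>e. grad (f e) a \<partial>M)"
  using assms by (simp add: grad_add grad_const grad_cmult)

theorem proposition2:
  fixes P :: "'e measure"
    and p :: "'t::euclidean_space \<Rightarrow> real^'p \<Rightarrow> real^'l \<Rightarrow> real"
    and q :: "'f::euclidean_space \<Rightarrow> real^'l \<Rightarrow> real^'p \<Rightarrow> real"
    and py :: "'w::euclidean_space \<Rightarrow> 'y \<Rightarrow> real^'l \<Rightarrow> real"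
    and g :: "'f \<Rightarrow> 'e \<Rightarrow> real^'p \<Rightarrow> real^'l"
    and h :: "'t \<Rightarrow> 'f"
    and x :: "real^'p" and y :: 'y and lam :: real
    and \<theta>0 :: 't and \<phi>0 :: 'f and \<psi>0 :: 'w
    and U :: "'t set" and V :: "'f set"
  assumes P: "prob_space P"
    and lam: "lam \<ge> 0"
    \<comment> \<open>positive densities\<close>
    and p_pos: "\<And>\<theta> s. p \<theta> x s > 0"
    and q_pos: "\<And>\<phi> s. q \<phi> s x > 0"
    and py_pos: "\<And>\<psi> s. py \<psi> y s > 0"
    \<comment> \<open>differentiability of the models and of the reparameterisation\<close>
    and p_diff: "\<And>\<theta> s. (\<lambda>(\<theta>', s'). p \<theta>' x s') differentiable (at (\<theta>, s))"
    and q_diff: "\<And>\<phi> s. (\<lambda>(\<phi>', s'). q \<phi>' s' x) differentiable (at (\<phi>, s))"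
    and py_diff: "\<And>\<psi> s. (\<lambda>(\<psi>', s'). py \<psi>' y s') differentiable (at (\<psi>, s))"
    and g_diff: "\<And>e \<phi>. (\<lambda>\<phi>'. g \<phi>' e x) differentiable (at \<phi>)"
    \<comment> \<open>the constraint determines phi = h theta near (theta0, phi0)\<close>
    and U: "open U" "\<theta>0 \<in> U" and V: "open V" "\<phi>0 \<in> V"
    and hUV: "h ` U \<subseteq> V"
    and h_diff: "h differentiable_on U"
    and h0: "\<phi>0 = h \<theta>0"
    and constraint_iff: "\<And>\<theta> \<phi>. \<theta> \<in> U \<Longrightarrow> \<phi> \<in> V \<Longrightarrow>
           (grad (elbo P p q g x \<theta>) \<phi> = 0 \<longleftrightarrow> \<phi> = h \<theta>)"
    \<comment> \<open>gradients may be interchanged with expectations over the noise\<close>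
    and ic_phi: "grad_interchange P
           (\<lambda>e \<phi>. ln (p \<theta>0 x (g \<phi> e x)) - ln (q \<phi> (g \<phi> e x) x)) \<phi>0"
    and ic_theta_obj: "grad_interchange P
           (\<lambda>e \<theta>. ln (p \<theta> x (g (h \<theta>) e x)) - ln (q (h \<theta>) (g (h \<theta>) e x) x)
                  + lam * ln (py \<psi>0 y (g (h \<theta>) e x))) \<theta>0"
    and ic_theta_p: "grad_interchange P (\<lambda>e \<theta>. ln (p \<theta> x (g \<phi>0 e x))) \<theta>0"
    and ic_theta_py: "grad_interchange P (\<lambda>e \<theta>. ln (py \<psi>0 y (g (h \<theta>) e x))) \<theta>0"
    and ic_psi_obj: "grad_interchange P
           (\<lambda>e \<psi>. ln (p \<theta>0 x (g \<phi>0 e x)) - ln (q \<phi>0 (g \<phi>0 e x) x)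
                  + lam * ln (py \<psi> y (g \<phi>0 e x))) \<psi>0"
    \<comment> \<open>stationary point of the constrained problem (phi eliminated via phi = h theta)\<close>
    and stat_theta: "grad (\<lambda>\<theta>. sup_obj P p q py g lam x y \<theta> (h \<theta>) \<psi>0) \<theta>0 = 0"
    and stat_psi: "grad (\<lambda>\<psi>. sup_obj P p q py g lam x y \<theta>0 \<phi>0 \<psi>) \<psi>0 = 0"
  shows "(\<integral>e. grad (\<lambda>\<phi>. ln (p \<theta>0 x (g \<phi> e x)) - ln (q \<phi> (g \<phi> e x) x)) \<phi>0 \<partial>P) = 0
       \<and> (\<integral>e. grad (\<lambda>\<theta>. ln (p \<theta> x (g \<phi>0 e x))) \<theta>0 \<partial>P)
           = - (lam *\<^sub>R (\<integral>e. grad (\<lambda>\<theta>. ln (py \<psi>0 y (g (h \<theta>) e x))) \<theta>0 \<partial>P))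
       \<and> lam *\<^sub>R (\<integral>e. grad (\<lambda>\<psi>. ln (py \<psi> y (g \<phi>0 e x))) \<psi>0 \<partial>P) = 0"
proof -
  obtain Dh where Dh: "(h has_derivative Dh) (at \<theta>0)"
    using h_diff U by (meson differentiable_def differentiable_on_eq_differentiable_at)
  then have "h differentiable (at \<theta>0)"
    unfolding differentiable_def by blast
  have "grad (elbo P p q g x \<theta>0) \<phi>0 = 0"
    using constraint_iff[OF U(2) V(2)] h0 by simp
  then have i: "(\<integral>e. grad (\<lambda>\<phi>. ln (p \<theta>0 x (g \<phi> e x)) - ln (q \<phi> (g \<phi> e x) x)) \<phi>0 \<partial>P) = 0"
    using ic_phi unfolding grad_interchange_def elbo_def[abs_def] by simp
  have iii: "lam *\<^sub>R (\<integral>e. grad (\<lambda>\<psi>. ln (py \<psi> y (g \<phi>0 e x))) \<psi>0 \<partial>P) = 0"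
  proof -
    have "(\<integral>e. grad (\<lambda>\<psi>. ln (p \<theta>0 x (g \<phi>0 e x)) - ln (q \<phi>0 (g \<phi>0 e x) x)
                  + lam * ln (py \<psi> y (g \<phi>0 e x))) \<psi>0 \<partial>P) = 0"
      using stat_psi ic_psi_obj unfolding grad_interchange_def sup_obj_def[abs_def] by simp
    moreover have "(\<lambda>\<psi>. ln (py \<psi> y (g \<phi>0 e x))) differentiable (at \<psi>0)" for e
      by (intro differentiable_ln_compose_case_prod[OF py_diff py_pos]) simp_all
    ultimately show ?thesis
      by (simp add: integral_grad_const_add_cmult)
  qed
  have ii: "(\<integral>e. grad (\<lambda>\<theta>. ln (p \<theta> x (g \<phi>0 e x))) \<theta>0 \<partial>P)
      = - (lam *\<^sub>R (\<integral>e. grad (\<lambda>\<theta>. ln (py \<psi>0 y (g (h \<theta>) e x))) \<theta>0 \<partial>P))"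
  proof -
    have B_diff: "(\<lambda>\<theta>. ln (py \<psi>0 y (g (h \<theta>) e x))) differentiable (at \<theta>0)" for e
      by (intro differentiable_ln_compose_case_prod[OF py_diff py_pos]
          differentiable_compose[OF g_diff] \<open>h differentiable (at \<theta>0)\<close>) simp
    have partial_theta: "grad (\<lambda>\<theta>. ln (p \<theta> x (g \<phi>0 e x)) - ln (q \<phi>0 (g \<phi>0 e x) x)) \<theta>0
        = grad (\<lambda>\<theta>. ln (p \<theta> x (g \<phi>0 e x))) \<theta>0" for e
      using differentiable_ln_compose_case_prod[OF p_diff p_pos differentiable_ident differentiable_const]
      by (simp add: grad_diff grad_const)
    have "0 = (\<integral>e. grad (\<lambda>\<theta>. ln (p \<theta> x (g (h \<theta>) e x)) - ln (q (h \<theta>) (g (h \<theta>) e x) x)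
                  + lam * ln (py \<psi>0 y (g (h \<theta>) e x))) \<theta>0 \<partial>P)"
      using stat_theta ic_theta_obj unfolding grad_interchange_def sup_obj_def[abs_def] by simp
    also have "\<dots> = (\<integral>e. grad (\<lambda>\<theta>. ln (p \<theta> x (g \<phi>0 e x))) \<theta>0 \<partial>P)
        + lam *\<^sub>R (\<integral>e. grad (\<lambda>\<theta>. ln (py \<psi>0 y (g (h \<theta>) e x))) \<theta>0 \<partial>P)"
      using integral_grad_envelope[OF differentiable_elbo_integrand[OF p_diff p_pos q_diff q_pos g_diff]
          B_diff Dh, where M = P and c = lam]
        partial_theta ic_theta_p ic_phi ic_theta_py i
      by (simp add: grad_interchange_def h0)
    finally show ?thesis
      by (simp add: eq_neg_iff_add_eq_0)
  qed
  show ?thesis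
    using i ii iii by blast
qed

end
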